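(* Let $\mathcal{C}\subset\mathbb{R}^n$ be a nonempty compact convex set with Euclidean diameter $D$, let $f$ be continuously differentiable with $\nabla f$ $L$-Lipschitz on $\mathcal{C}$, $f^\star=\min_{\mathcal{C}}f$, and $F_0=f(x^0)-f^\star$. Let $T\in\mathbb{N}$ and let $\{x^t\}_{t=0}^{T}$ be generated by the Boosted Frank–Wolfe algorithm described in the context with $m^t=\nabla f(x^t)$ and constant step decay $\eta_t=\frac1{\sqrt{T+1}}$. Then $$\min_{0\le t\le T}\langle\nabla f(x^t),x^t-s^t\rangle\le\frac{F_0+\frac{LD^2}{2}}{\sqrt{T+1}},$$ where $s^t=\mathrm{lmo}(\nabla f(x^t))$.
   Context: Euclidean norms; $D=\max_{x,y\in\mathcal{C}}\|x-y\|$. $\mathrm{lmo}(v)$ denotes a (fixed selection of a) point of $\arg\min_{s\in\mathcal{C}}\langle s,v\rangle$. $\mathrm{align}(d,\hat d)=\frac{\langle d,\hat d\rangle}{\|d\|\|\hat d\|}$ if $\hat d\ne0$, $-1$ if $\hat d=0$. Algorithm: inputs $K\ge1$, $\delta\in(0,1]$, step decays $\eta_t>0$, a vector $m^{\rm init}$; $x^0=\mathrm{lmo}(m^{\rm init})$. At iteration $t$ a vector $m^t$ is formed. Boosting: $\psi^0=0$, $\Lambda_t=0$, $k=0$; while $k\le K-1$: $r^k=-m^t-\psi^k$, $v^k=\mathrm{lmo}(-r^k)$; if $k=0$, $s^t=v^0$; if $\psi^k\ne0$, $u^k$ is whichever of $v^k-x^t$, $-\psi^k/\|\psi^k\|$ has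 the larger inner product with $r^k$, else $u^k=v^k-x^t$; if $u^k=0$ stop; $\lambda_k=\langle r^k,u^k\rangle/\|u^k\|^2$, $\phi^k=\psi^k+\lambda_ku^k$; if $\mathrm{align}(-m^t,\phi^k)-\mathrm{align}(-m^t,\psi^k)\ge\delta$ then $\psi^{k+1}=\phi^k$, $\Lambda_t\leftarrow\Lambda_t+\lambda_k$ if $u^k=v^k-x^t$ and $\Lambda_t\leftarrow\Lambda_t(1-\lambda_k/\|\psi^k\|)$ otherwise, $k\leftarrow k+1$; else stop. With $\psi$ the last accepted candidate, $\tilde d^t=\psi/\Lambda_t$ if $\Lambda_t\ne0$, else $0$. $\gamma_t=\min\{\eta_t\|s^t-x^t\|/\|\tilde d^t\|,1\}$ if $\tilde d^t\ne0$, else $1$. If $\gamma_t<1$: $x^{t+1}=x^t+\gamma_t\tilde d^t$; otherwise $x^{t+1}=x^t+\eta_t(s^t-x^t)$. *)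

theory Defs
  imports "HOL-Analysis.Analysis"
begin

definition align :: "'a::real_inner \<Rightarrow> 'a \<Rightarrow> real" where
  "align d dh = (if dh = 0 then -1 else inner d dh / (norm d * norm dh))"

definition boost_step ::
  "('a::real_inner \<Rightarrow> 'a) \<Rightarrow> real \<Rightarrow> 'a \<Rightarrow> 'a \<Rightarrow> 'a \<times> real \<Rightarrow> ('a \<times> real) option" where
  "boost_step lmo \<delta> x m st =
    (let \<psi> = fst st; \<Lambda> = snd st;
         r = - m - \<psi>;
         v = lmo (- r);
         a = - (scaleR (1 / norm \<psi>) \<psi>);
         u = (if \<psi> \<noteq> 0 \<and> inner r a > inner r (v - x) then a else v - x)
     in if u = 0 then None
        else (let lam = inner r u / (norm u)\<^sup>2;
                  \<phi> = \<psi> + scaleR lam u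
              in if align (- m) \<phi> - align (- m) \<psi> \<ge> \<delta>
                 then Some (\<phi>, if u = v - x then \<Lambda> + lam else \<Lambda> * (1 - lam / norm \<psi>))
                 else None))"

fun boost_loop ::
  "('a::real_inner \<Rightarrow> 'a) \<Rightarrow> real \<Rightarrow> 'a \<Rightarrow> 'a \<Rightarrow> nat \<Rightarrow> 'a \<times> real \<Rightarrow> 'a \<times> real" where
  "boost_loop lmo \<delta> x m 0 st = st"
| "boost_loop lmo \<delta> x m (Suc n) st =
     (case boost_step lmo \<delta> x m st of None \<Rightarrow> st
      | Some st' \<Rightarrow> boost_loop lmo \<delta> x m n st')"

definition bfw_next ::
  "('a::real_inner \<Rightarrow> 'a) \<Rightarrow> nat \<Rightarrow> real \<Rightarrow> real \<Rightarrow> 'a \<Rightarrow> 'a \<Rightarrow> 'a" where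
  "bfw_next lmo K \<delta> \<eta> m x =
    (let st = boost_loop lmo \<delta> x m K (0, 0);
         \<psi> = fst st; \<Lambda> = snd st;
         s = lmo m;
         d = (if \<Lambda> \<noteq> 0 then scaleR (1 / \<Lambda>) \<psi> else 0);
         \<gamma> = (if d \<noteq> 0 then min (\<eta> * norm (s - x) / norm d) 1 else 1)
     in if \<gamma> < 1 then x + scaleR \<gamma> d else x + scaleR \<eta> (s - x))"

end

theory Submission
  imports Defs
begin

text \<open>Every accepted boosting step moves \<psi> towards an oracle vertex and strictly improves its
  alignment with -m, so x + \<psi>/\<Lambda> stays a convex combination of x and oracle vertices, hence
  in C, and \<psi> stays at least as steep, per unit length, as the Frank-Wolfe direction s - x.
  The step length makes the move from x(t) to x(t+1) exactly \<eta> times as long as s - x(t), so by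
  the descent lemma each iteration satisfies f(x(t+1)) \<le> f(x(t)) - \<eta> g(t) + \<eta>^2 L D^2 / 2,
  where g(t) is the Frank-Wolfe gap. Summing over t \<le> T with \<eta> = 1 / sqrt(T+1) gives the bound.\<close>

lemma align_ge_minus_one: "-1 \<le> align d v"
proof (cases "d = 0 \<or> v = 0")
  case False
  then have "0 < norm d * norm v" by simp
  moreover have "- (norm d * norm v) \<le> inner d v"
    using Cauchy_Schwarz_ineq2[of d v] by linarith
  ultimately show ?thesis using False by (simp add: align_def field_simps)
qed (auto simp: align_def)

lemma align_scaleR_le:
  assumes "0 \<le> align d v"
  shows "align d (c *\<^sub>R v) \<le> align d v"
proof -
  consider "0 < c" | "c = 0" | "c < 0" by linarith
  then show ?thesis
  proof cases
    case 1
    then show ?thesis by (simp add: align_def)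
  next
    case 2
    then show ?thesis using assms by (simp add: align_def)
  next
    case 3
    show ?thesis
    proof (cases "v = 0")
      case False
      with 3 have "align d (c *\<^sub>R v) = - align d v" by (simp add: align_def)
      then show ?thesis using assms by simp
    qed (use assms in \<open>simp add: align_def\<close>)
  qed
qed

lemma align_less_imp_ratio_less:
  assumes "v \<noteq> 0" and less: "align d v < align d w"
  shows "inner d v / norm v < inner d w / norm w"
proof -
  have w: "w \<noteq> 0"
    using less align_ge_minus_one[of d v] by (auto simp: align_def)
  have "d \<noteq> 0"
  proof
    assume "d = 0"
    with less assms(1) show False by (simp add: align_def split: if_splits)
  qed
  then have "(inner d v / norm v) / norm d < (inner d w / norm w) / norm d"
    using less assms(1) w by (simp add: align_def mult.commute)
  then show ?thesis
    using \<open>d \<noteq> 0\<close> by (metis divide_less_cancel zero_less_norm_iff)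
qed

lemma lipschitz_negative_const_imp_eq:
  assumes "\<And>y z. y \<in> C \<Longrightarrow> z \<in> C \<Longrightarrow> norm (g y - g z) \<le> L * norm (y - z)"
    and "L < 0" and "y \<in> C" and "z \<in> C"
  shows "y = z"
proof (rule ccontr)
  assume "y \<noteq> z"
  then have "L * norm (y - z) < 0" using \<open>L < 0\<close> by (simp add: mult_neg_pos)
  with assms(1)[OF \<open>y \<in> C\<close> \<open>z \<in> C\<close>] show False
    using norm_ge_zero[of "g y - g z"] by linarith
qed

text \<open>The descent lemma: along the segment from x to y the function
  f (x + t (y - x)) - t \<langle>f' x, y - x\<rangle> - L t^2 \<parallel>y - x\<parallel>^2 / 2 has nonpositive derivative.\<close>
lemma lipschitz_gradient_quadratic_bound:
  fixes f :: "'a::real_inner \<Rightarrow> real"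
  assumes "convex C"
    and deriv: "\<And>y. y \<in> C \<Longrightarrow> (f has_derivative (\<lambda>h. inner (f' y) h)) (at y)"
    and lip: "\<And>y z. y \<in> C \<Longrightarrow> z \<in> C \<Longrightarrow> norm (f' y - f' z) \<le> L * norm (y - z)"
    and x: "x \<in> C" and y: "y \<in> C"
  shows "f y \<le> f x + inner (f' x) (y - x) + L / 2 * (norm (y - x))\<^sup>2"
proof -
  define p where "p = (\<lambda>t::real. x + t *\<^sub>R (y - x))"
  define g where "g = (\<lambda>t. f (p t) - t * inner (f' x) (y - x) - L / 2 * t\<^sup>2 * (norm (y - x))\<^sup>2)"
  have p_in: "p t \<in> C" if "0 \<le> t" "t \<le> 1" for t
    using convexD_alt[OF \<open>convex C\<close> x y that] by (simp add: p_def algebra_simps)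
  have "g 1 \<le> g 0"
  proof (rule DERIV_nonpos_imp_nonincreasing[of 0 1 g])
    fix t :: real assume t: "0 \<le> t" "t \<le> 1"
    have "(p has_derivative (\<lambda>h. h *\<^sub>R (y - x))) (at t)"
      unfolding p_def by (auto intro!: derivative_eq_intros)
    from diff_chain_at[OF this deriv[OF p_in[OF t]]]
    have "((f \<circ> p) has_derivative (\<lambda>h. inner (f' (p t)) (h *\<^sub>R (y - x)))) (at t)"
      by (simp add: o_def)
    then have "((f \<circ> p) has_real_derivative inner (f' (p t)) (y - x)) (at t)"
      unfolding has_field_derivative_def by (simp add: mult.commute[of _ "inner _ _"])
    then have g': "(g has_real_derivative inner (f' (p t) - f' x) (y - x) - L * t * (norm (y - x))\<^sup>2) (at t)"
      unfolding g_def o_def by (auto intro!: derivative_eq_intros simp: inner_diff_left)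
    have "inner (f' (p t) - f' x) (y - x) \<le> norm (f' (p t) - f' x) * norm (y - x)"
      by (rule norm_cauchy_schwarz)
    also have "\<dots> \<le> L * norm (p t - x) * norm (y - x)"
      by (rule mult_right_mono[OF lip[OF p_in[OF t] x]]) simp
    also have "\<dots> = L * t * (norm (y - x))\<^sup>2"
      using t by (simp add: p_def power2_eq_square)
    finally show "\<exists>D. (g has_real_derivative D) (at t) \<and> D \<le> 0"
      using g' by force
  qed simp
  then show ?thesis by (simp add: g_def p_def)
qed

lemma telescoping_min_bound:
  fixes a g :: "nat \<Rightarrow> real"
  assumes "0 \<le> \<eta>" and step: "\<And>t. t \<le> T \<Longrightarrow> \<eta> * g t \<le> a t - a (Suc t) + c"
  shows "\<eta> * (real T + 1) * (MIN t\<in>{0..T}. g t) \<le> a 0 - a (Suc T) + (real T + 1) * c"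
proof -
  have "\<eta> * (real T + 1) * (MIN t\<in>{0..T}. g t) = (\<Sum>t\<le>T. \<eta> * (MIN t\<in>{0..T}. g t))"
    by simp
  also have "\<dots> \<le> (\<Sum>t\<le>T. \<eta> * g t)"
    by (intro sum_mono mult_left_mono \<open>0 \<le> \<eta>\<close>) auto
  also have "\<dots> \<le> (\<Sum>t\<le>T. a t - a (Suc t) + c)"
    by (intro sum_mono step) simp
  also have "\<dots> = a 0 - a (Suc T) + (real T + 1) * c"
    by (simp add: sum.distrib sum_telescope)
  finally show ?thesis .
qed

lemma mem_convex_rescaled_sum:
  assumes "convex C" "w \<in> C" "v \<in> C" "0 \<le> a" "0 \<le> b" "0 < a + b"
  shows "x + (1 / (a + b)) *\<^sub>R (a *\<^sub>R (w - x) + b *\<^sub>R (v - x)) \<in> C"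
proof -
  have "(a / (a + b)) *\<^sub>R x + (b / (a + b)) *\<^sub>R x = x"
    using assms by (simp add: scaleR_left_distrib[symmetric] add_divide_distrib[symmetric])
  then have "x + (1 / (a + b)) *\<^sub>R (a *\<^sub>R (w - x) + b *\<^sub>R (v - x))
      = (a / (a + b)) *\<^sub>R w + (b / (a + b)) *\<^sub>R v"
    by (simp add: algebra_simps)
  then show ?thesis using mem_convex_alt[OF assms] by simp
qed

lemma step_along_steeper_direction:
  fixes m w d :: "'a::real_inner"
  assumes "convex C" and "x \<in> C" and "x + d \<in> C" and "d \<noteq> 0" and "0 \<le> \<eta>"
    and steeper: "inner m d / norm d \<le> inner m w / norm w"
    and \<gamma>: "\<gamma> = \<eta> * norm w / norm d" and "\<gamma> \<le> 1"
  shows "x + \<gamma> *\<^sub>R d \<in> C" and "inner m (\<gamma> *\<^sub>R d) \<le> \<eta> * inner m w"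
    and "norm (\<gamma> *\<^sub>R d) = \<eta> * norm w"
proof -
  have "0 \<le> \<gamma>" using \<gamma> \<open>0 \<le> \<eta>\<close> by simp
  from convexD_alt[OF assms(1-3) this \<open>\<gamma> \<le> 1\<close>]
  show "x + \<gamma> *\<^sub>R d \<in> C" by (simp add: algebra_simps)
  have "inner m (\<gamma> *\<^sub>R d) = \<eta> * (norm w * (inner m d / norm d))"
    using \<gamma> by simp
  also have "\<dots> \<le> \<eta> * inner m w"
    using mult_left_mono[OF steeper, of "norm w"] \<open>0 \<le> \<eta>\<close>
    by (intro mult_left_mono) (simp_all split: if_splits)
  finally show "inner m (\<gamma> *\<^sub>R d) \<le> \<eta> * inner m w" .
  show "norm (\<gamma> *\<^sub>R d) = \<eta> * norm w"
    using \<gamma> \<open>0 \<le> \<eta>\<close> \<open>d \<noteq> 0\<close> by simp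
qed

text \<open>For \<Lambda> = 0 the membership condition just says x \<in> C, as 1 / 0 = 0.\<close>
fun boost_invariant :: "'a::real_inner set \<Rightarrow> 'a \<Rightarrow> 'a \<Rightarrow> 'a \<Rightarrow> 'a \<times> real \<Rightarrow> bool" where
  "boost_invariant C x m s (\<psi>, \<Lambda>) \<longleftrightarrow> 0 \<le> \<Lambda> \<and> x + (1 / \<Lambda>) *\<^sub>R \<psi> \<in> C \<and>
     (\<psi> \<noteq> 0 \<longrightarrow> 0 < \<Lambda> \<and> inner m \<psi> / norm \<psi> \<le> inner m (s - x) / norm (s - x))"

locale linear_minimization_oracle =
  fixes C :: "'a::real_inner set" and lmo :: "'a \<Rightarrow> 'a"
  assumes C_convex: "convex C"
    and lmo_in: "lmo v \<in> C"
    and lmo_min: "s \<in> C \<Longrightarrow> inner (lmo v) v \<le> inner s v"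
begin

lemma inner_lmo_le: "x \<in> C \<Longrightarrow> inner v (lmo v - x) \<le> 0"
  using lmo_min[of x v] by (simp add: inner_diff_right inner_commute)

text \<open>Moving along -\<psi> / \<parallel>\<psi>\<parallel> only rescales \<psi>, which cannot raise its nonnegative alignment,
  so an accepted step always moves towards the oracle vertex.\<close>
lemma boost_step_SomeE:
  assumes x: "x \<in> C" and \<delta>: "0 < \<delta>"
    and inv: "boost_invariant C x m (lmo m) (\<psi>, \<Lambda>)"
    and step: "boost_step lmo \<delta> x m (\<psi>, \<Lambda>) = Some st'"
  obtains lam where "0 < lam"
    and "st' = (\<psi> + lam *\<^sub>R (lmo (m + \<psi>) - x), \<Lambda> + lam)"
    and "align (- m) \<psi> < align (- m) (\<psi> + lam *\<^sub>R (lmo (m + \<psi>) - x))"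
proof -
  define r where "r = - m - \<psi>"
  define v where "v = lmo (- r)"
  define a where "a = - (scaleR (1 / norm \<psi>) \<psi>)"
  define u where "u = (if \<psi> \<noteq> 0 \<and> inner r a > inner r (v - x) then a else v - x)"
  define lam where "lam = inner r u / (norm u)\<^sup>2"
  define \<phi> where "\<phi> = \<psi> + scaleR lam u"
  have "boost_step lmo \<delta> x m (\<psi>, \<Lambda>) = (if u = 0 then None
      else if align (- m) \<phi> - align (- m) \<psi> \<ge> \<delta>
        then Some (\<phi>, if u = v - x then \<Lambda> + lam else \<Lambda> * (1 - lam / norm \<psi>))
        else None)"
    unfolding boost_step_def Let_def fst_conv snd_conv r_def v_def a_def u_def lam_def \<phi>_def
    by (rule refl)
  with step \<delta> have improved: "align (- m) \<psi> < align (- m) \<phi>"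
    and st': "st' = (\<phi>, if u = v - x then \<Lambda> + lam else \<Lambda> * (1 - lam / norm \<psi>))"
    by (auto split: if_splits)
  have u: "u = v - x"
  proof (rule ccontr)
    assume "u \<noteq> v - x"
    then have "\<psi> \<noteq> 0" and \<phi>: "\<phi> = (1 - lam / norm \<psi>) *\<^sub>R \<psi>"
      by (auto simp: u_def \<phi>_def a_def algebra_simps split: if_splits)
    have "inner m \<psi> / norm \<psi> \<le> 0"
      using inv \<open>\<psi> \<noteq> 0\<close> inner_lmo_le[OF x, of m]
      by (smt (verit) boost_invariant.simps divide_nonpos_nonneg norm_ge_zero)
    then have "0 \<le> align (- m) \<psi>"
      using \<open>\<psi> \<noteq> 0\<close> by (simp add: align_def divide_nonpos_nonneg divide_le_0_iff)
    then have "align (- m) \<phi> \<le> align (- m) \<psi>"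
      unfolding \<phi> by (rule align_scaleR_le)
    with improved show False by simp
  qed
  have "lam \<noteq> 0" using improved by (auto simp: \<phi>_def)
  moreover have "0 \<le> lam"
    using inner_lmo_le[OF x, of "- r"] by (simp add: lam_def u v_def)
  ultimately have "0 < lam" by simp
  moreover have "- r = m + \<psi>" by (simp add: r_def)
  ultimately show ?thesis
    using that st' improved by (simp add: \<phi>_def u v_def)
qed

lemma boost_step_preserves_invariant:
  assumes x: "x \<in> C" and \<delta>: "0 < \<delta>"
    and inv: "boost_invariant C x m (lmo m) st"
    and step: "boost_step lmo \<delta> x m st = Some st'"
  shows "boost_invariant C x m (lmo m) st'"
proof -
  obtain \<psi> \<Lambda> where st: "st = (\<psi>, \<Lambda>)" by fastforce
  define v where "v = lmo (m + \<psi>)"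
  from inv st have \<Lambda>: "0 \<le> \<Lambda>" and feasible: "x + (1 / \<Lambda>) *\<^sub>R \<psi> \<in> C"
    and steeper: "\<psi> \<noteq> 0 \<Longrightarrow> 0 < \<Lambda> \<and> inner m \<psi> / norm \<psi> \<le> inner m (lmo m - x) / norm (lmo m - x)"
    by auto
  obtain lam where lam: "0 < lam" and st': "st' = (\<psi> + lam *\<^sub>R (v - x), \<Lambda> + lam)"
    and improved: "align (- m) \<psi> < align (- m) (\<psi> + lam *\<^sub>R (v - x))"
    using boost_step_SomeE[OF x \<delta>] inv step unfolding st v_def by blast
  have "x + (1 / (\<Lambda> + lam)) *\<^sub>R (\<psi> + lam *\<^sub>R (v - x)) \<in> C"
  proof -
    define w where "w = x + (1 / \<Lambda>) *\<^sub>R \<psi>"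
    have "\<psi> = \<Lambda> *\<^sub>R (w - x)"
      using steeper by (cases "\<psi> = 0") (auto simp: w_def)
    then have "\<psi> + lam *\<^sub>R (v - x) = \<Lambda> *\<^sub>R (w - x) + lam *\<^sub>R (v - x)" by simp
    moreover have "w \<in> C" and "v \<in> C" using feasible lmo_in by (simp_all add: w_def v_def)
    ultimately show ?thesis
      using mem_convex_rescaled_sum[OF C_convex _ _ \<Lambda>, where b = lam and x = x] lam \<Lambda> by simp
  qed
  moreover have "inner m (\<psi> + lam *\<^sub>R (v - x)) / norm (\<psi> + lam *\<^sub>R (v - x))
      \<le> inner m (lmo m - x) / norm (lmo m - x)"
  proof (cases "\<psi> = 0")
    case True
    then show ?thesis using lam by (simp add: v_def)
  next
    case False
    from align_less_imp_ratio_less[OF False improved] steeper[OF False]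
    show ?thesis by simp
  qed
  ultimately show ?thesis using st' \<Lambda> lam by simp
qed

lemma boost_loop_preserves_invariant:
  assumes "x \<in> C" and "0 < \<delta>"
  shows "boost_invariant C x m (lmo m) st \<Longrightarrow> boost_invariant C x m (lmo m) (boost_loop lmo \<delta> x m n st)"
proof (induction n arbitrary: st)
  case (Suc n)
  then show ?case
    using boost_step_preserves_invariant[OF assms Suc.prems] by (auto split: option.split)
qed simp

lemma bfw_next_step_bounds:
  fixes m :: 'a and K :: nat
  assumes x: "x \<in> C" and \<delta>: "0 < \<delta>" and \<eta>: "0 \<le> \<eta>" "\<eta> \<le> 1"
  defines "y \<equiv> bfw_next lmo K \<delta> \<eta> m x" and "s \<equiv> lmo m"
  shows "y \<in> C" and "inner m (y - x) \<le> \<eta> * inner m (s - x)" and "norm (y - x) \<le> \<eta> * norm (s - x)"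
proof -
  obtain \<psi> \<Lambda> where loop: "boost_loop lmo \<delta> x m K (0, 0) = (\<psi>, \<Lambda>)" by fastforce
  have "boost_invariant C x m s (\<psi>, \<Lambda>)"
    using boost_loop_preserves_invariant[OF x \<delta>, of m "(0, 0)" K] x loop by (simp add: s_def)
  then have \<Lambda>: "0 \<le> \<Lambda>" and feasible: "x + (1 / \<Lambda>) *\<^sub>R \<psi> \<in> C"
    and steeper: "\<psi> \<noteq> 0 \<Longrightarrow> 0 < \<Lambda> \<and> inner m \<psi> / norm \<psi> \<le> inner m (s - x) / norm (s - x)"
    by auto
  define d where "d = (if \<Lambda> \<noteq> 0 then scaleR (1 / \<Lambda>) \<psi> else 0)"
  define \<gamma> where "\<gamma> = (if d \<noteq> 0 then min (\<eta> * norm (s - x) / norm d) 1 else 1)"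
  have y: "y = (if \<gamma> < 1 then x + \<gamma> *\<^sub>R d else x + \<eta> *\<^sub>R (s - x))"
    unfolding y_def bfw_next_def Let_def loop fst_conv snd_conv s_def[symmetric] d_def[symmetric]
      \<gamma>_def[symmetric]
    by (rule refl)
  have "y \<in> C \<and> inner m (y - x) \<le> \<eta> * inner m (s - x) \<and> norm (y - x) \<le> \<eta> * norm (s - x)"
  proof (cases "\<gamma> < 1")
    case True
    then have "d \<noteq> 0" by (auto simp: \<gamma>_def)
    then have "\<psi> \<noteq> 0" and "\<Lambda> \<noteq> 0" and d: "d = (1 / \<Lambda>) *\<^sub>R \<psi>" by (auto simp: d_def split: if_splits)
    with steeper have "0 < \<Lambda>" and d_steeper: "inner m d / norm d \<le> inner m (s - x) / norm (s - x)"
      by auto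
    have "\<gamma> = \<eta> * norm (s - x) / norm d"
      using True \<open>d \<noteq> 0\<close> by (auto simp: \<gamma>_def min_def split: if_splits)
    from step_along_steeper_direction[OF C_convex x _ \<open>d \<noteq> 0\<close> \<eta>(1) d_steeper this] feasible d True
    show ?thesis by (simp add: y)
  next
    case False
    then have y_eq: "y = x + \<eta> *\<^sub>R (s - x)" by (simp add: y)
    have "(1 - \<eta>) *\<^sub>R x + \<eta> *\<^sub>R s \<in> C"
      using convexD_alt[OF C_convex x lmo_in \<eta>] by (simp add: s_def)
    then have "y \<in> C" by (simp add: y_eq algebra_simps)
    then show ?thesis using \<eta> by (simp add: y_eq)
  qed
  then show "y \<in> C" and "inner m (y - x) \<le> \<eta> * inner m (s - x)" and "norm (y - x) \<le> \<eta> * norm (s - x)"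
    by auto
qed

lemma bfw_next_decrease:
  fixes f :: "'a \<Rightarrow> real"
  assumes "bounded C"
    and deriv: "\<And>y. y \<in> C \<Longrightarrow> (f has_derivative (\<lambda>h. inner (f' y) h)) (at y)"
    and lip: "\<And>y z. y \<in> C \<Longrightarrow> z \<in> C \<Longrightarrow> norm (f' y - f' z) \<le> L * norm (y - z)"
    and x: "x \<in> C" and \<delta>: "0 < \<delta>" and \<eta>: "0 \<le> \<eta>" "\<eta> \<le> 1"
  shows "f (bfw_next lmo K \<delta> \<eta> (f' x) x)
    \<le> f x - \<eta> * inner (f' x) (x - lmo (f' x)) + \<eta>\<^sup>2 * (L * (diameter C)\<^sup>2 / 2)"
proof -
  define y where "y = bfw_next lmo K \<delta> \<eta> (f' x) x"
  define s where "s = lmo (f' x)"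
  note bounds = bfw_next_step_bounds[OF x \<delta> \<eta>, where m = "f' x" and K = K, folded y_def s_def]
  have "L / 2 * (norm (y - x))\<^sup>2 \<le> \<eta>\<^sup>2 * (L * (diameter C)\<^sup>2 / 2)"
  proof (cases "0 \<le> L")
    case True
    have "norm (s - x) \<le> diameter C"
      using diameter_bounded_bound[OF \<open>bounded C\<close> lmo_in x] by (simp add: s_def dist_norm)
    then have "norm (y - x) \<le> \<eta> * diameter C"
      using bounds(3) mult_left_mono[OF _ \<eta>(1)] by fastforce
    then have "(norm (y - x))\<^sup>2 \<le> (\<eta> * diameter C)\<^sup>2"
      by (simp add: power_mono)
    then show ?thesis
      using mult_left_mono[OF _ True] by (fastforce simp: power_mult_distrib algebra_simps)
  next
    case False
    then have "C = {x}"
      using lipschitz_negative_const_imp_eq[OF lip] x by fastforce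
    then show ?thesis using bounds(1) by simp
  qed
  moreover have "f y \<le> f x + inner (f' x) (y - x) + L / 2 * (norm (y - x))\<^sup>2"
    by (rule lipschitz_gradient_quadratic_bound[OF C_convex deriv lip x bounds(1)])
  moreover have "inner (f' x) (s - x) = - inner (f' x) (x - s)"
    by (simp add: inner_diff_right)
  ultimately show ?thesis
    unfolding y_def[symmetric] s_def[symmetric] using bounds(2) by (smt (verit) mult_minus_right)
qed

lemma bfw_constant_step_gap_bound:
  fixes f :: "'a \<Rightarrow> real" and y :: "nat \<Rightarrow> 'a"
  assumes "compact C"
    and deriv: "\<And>y. y \<in> C \<Longrightarrow> (f has_derivative (\<lambda>h. inner (f' y) h)) (at y)"
    and lip: "\<And>y z. y \<in> C \<Longrightarrow> z \<in> C \<Longrightarrow> norm (f' y - f' z) \<le> L * norm (y - z)"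
    and \<delta>: "0 < \<delta>" and \<eta>: "0 \<le> \<eta>" "\<eta> \<le> 1"
    and y0: "y 0 \<in> C"
    and y_Suc: "\<And>t. t \<le> T \<Longrightarrow> y (Suc t) = bfw_next lmo K \<delta> \<eta> (f' (y t)) (y t)"
  shows "\<eta> * (real T + 1) * (MIN t\<in>{0..T}. inner (f' (y t)) (y t - lmo (f' (y t))))
    \<le> f (y 0) - (INF z\<in>C. f z) + (real T + 1) * (\<eta>\<^sup>2 * (L * (diameter C)\<^sup>2 / 2))"
proof -
  have y_in: "y t \<in> C" if "t \<le> Suc T" for t
    using that
  proof (induction t)
    case (Suc t)
    then show ?case using bfw_next_step_bounds(1)[OF _ \<delta> \<eta>] y_Suc by simp
  qed (use y0 in simp)
  have "\<eta> * (real T + 1) * (MIN t\<in>{0..T}. inner (f' (y t)) (y t - lmo (f' (y t))))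
      \<le> f (y 0) - f (y (Suc T)) + (real T + 1) * (\<eta>\<^sup>2 * (L * (diameter C)\<^sup>2 / 2))"
  proof (rule telescoping_min_bound[OF \<eta>(1)])
    fix t assume "t \<le> T"
    then show "\<eta> * inner (f' (y t)) (y t - lmo (f' (y t)))
        \<le> f (y t) - f (y (Suc t)) + \<eta>\<^sup>2 * (L * (diameter C)\<^sup>2 / 2)"
      using bfw_next_decrease[OF compact_imp_bounded[OF \<open>compact C\<close>] deriv lip y_in \<delta> \<eta>, of t K]
        y_Suc
      by simp
  qed
  moreover have "(INF z\<in>C. f z) \<le> f (y (Suc T))"
  proof (rule cINF_lower[OF _ y_in[OF order_refl]])
    have "continuous_on C f"
      using deriv by (meson has_derivative_at_withinI has_derivative_continuous_on)
    then show "bdd_below (f ` C)"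
      by (intro bounded_imp_bdd_below compact_imp_bounded compact_continuous_image \<open>compact C\<close>)
  qed
  ultimately show ?thesis by simp
qed

end

theorem theorem8:
  fixes C :: "'a::euclidean_space set"
    and f :: "'a \<Rightarrow> real" and f' :: "'a \<Rightarrow> 'a" and U :: "'a set"
    and L \<delta> :: real and K T :: nat
    and lmo :: "'a \<Rightarrow> 'a" and minit :: 'a and x :: "nat \<Rightarrow> 'a"
  assumes C_ne: "C \<noteq> {}" and C_compact: "compact C" and C_convex: "convex C"
    and U_open: "open U" and C_U: "C \<subseteq> U"
    and f_deriv: "\<And>y. y \<in> U \<Longrightarrow> (f has_derivative (\<lambda>h. inner (f' y) h)) (at y)"
    and f'_cont: "continuous_on U f'"
    and f'_lip: "\<And>y z. y \<in> C \<Longrightarrow> z \<in> C \<Longrightarrow> norm (f' y - f' z) \<le> L * norm (y - z)"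
    and lmo_in: "\<And>v. lmo v \<in> C"
    and lmo_min: "\<And>v s. s \<in> C \<Longrightarrow> inner (lmo v) v \<le> inner s v"
    and K_pos: "K \<ge> 1" and delta_pos: "0 < \<delta>" and delta_le: "\<delta> \<le> 1"
    and x0: "x 0 = lmo minit"
    and x_step: "\<And>t. t < T \<Longrightarrow>
        x (Suc t) = bfw_next lmo K \<delta> (1 / sqrt (real T + 1)) (f' (x t)) (x t)"
  shows "(MIN t\<in>{0..T}. inner (f' (x t)) (x t - lmo (f' (x t))))
           \<le> (f (x 0) - (INF y\<in>C. f y) + L * (diameter C)\<^sup>2 / 2) / sqrt (real T + 1)"
proof -
  interpret lmo: linear_minimization_oracle C lmo
    using C_convex lmo_in lmo_min by unfold_locales
  define \<eta> where "\<eta> = 1 / sqrt (real T + 1)"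
  define B where "B = L * (diameter C)\<^sup>2 / 2"
  define gap where "gap = (\<lambda>z. inner (f' z) (z - lmo (f' z)))"
  text \<open>x_step determines x only up to index T; appending one more step makes the decrease
    bound available for every t \<le> T.\<close>
  define y where "y = x(Suc T := bfw_next lmo K \<delta> \<eta> (f' (x T)) (x T))"
  have "\<eta> * (real T + 1) * (MIN t\<in>{0..T}. gap (y t)) \<le> f (y 0) - (INF z\<in>C. f z) + (real T + 1) * (\<eta>\<^sup>2 * B)"
    unfolding gap_def B_def
  proof (rule lmo.bfw_constant_step_gap_bound[OF C_compact _ f'_lip delta_pos])
    show "\<And>z. z \<in> C \<Longrightarrow> (f has_derivative (\<lambda>h. inner (f' z) h)) (at z)"
      using f_deriv C_U by blast
    show "\<And>t. t \<le> T \<Longrightarrow> y (Suc t) = bfw_next lmo K \<delta> \<eta> (f' (y t)) (y t)"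
      using x_step by (fastforce simp: y_def \<eta>_def)
  qed (simp_all add: \<eta>_def y_def x0 lmo_in)
  moreover have "(\<lambda>t. gap (y t)) ` {0..T} = (\<lambda>t. gap (x t)) ` {0..T}"
    by (simp add: y_def)
  moreover have "\<eta> * (real T + 1) = sqrt (real T + 1)" and "(real T + 1) * (\<eta>\<^sup>2 * B) = B"
    by (simp_all add: \<eta>_def field_simps power_divide real_sqrt_mult_self[symmetric, of "real T + 1"])
  ultimately have "sqrt (real T + 1) * (MIN t\<in>{0..T}. gap (x t)) \<le> f (x 0) - (INF z\<in>C. f z) + B"
    by (simp add: y_def)
  then show ?thesis
    by (simp add: gap_def B_def pos_le_divide_eq mult.commute)
qed

end
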